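(* Let $X\subseteq\{0,1\}^n$, $f:X\to\{0,1\}$, $c>0$, and let $\{\ket{v_{x,i}}\in\mathbb{R}^m\}_{x\in X,i\in[n]}$ be a real $f$-deciding vector set of size $A$. Let $\ket{\psi_x}$ ($f(x)=1$), $\ket{\phi_x}$ ($f(x)=0$), $\kappa$, $\{\ket{\zeta_j}\}_{j\in[\kappa]}$, $\alpha_{j,x}$, the set $V$, $\varepsilon$, $S$, and the compressed vectors $\ket{\psi_x'},\ket{\phi_x'},\ket{\zeta_j'}$ be as described in the context. Then: (1) for all $j,l\in[\kappa]$, $|\braket{\zeta_j'}{\zeta_l'}-\delta_{j,l}|\le 4\varepsilon$; (2) for all $j\in[\kappa]$ and $x\in f^{-1}(0)$, $|\braket{\zeta_j'}{\phi_x'}|\le 2\varepsilon(c+1)A$; (3) for all $x$ with $f(x)=1$, $\big|\|\ket{\psi_x'}\|^2-1\big|\le 4\varepsilon\kappa$, and for all $x$ with $f(x)=0$, $\big|\|\ket{\phi_x'}\|-1\big|\le 3\varepsilon$.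
   Context: An $f$-deciding vector set $\{\ket{v_{x,i}}\}$ satisfies $\sum_{i:x_i\ne y_i}\braket{v_{x,i}}{v_{y,i}}=1$ for all $x,y\in X$ with $f(x)\ne f(y)$; its size is $A=\max_{x}\sum_i\|\ket{v_{x,i}}\|^2$. Let $\mathcal{H}=\mathbb{R}\oplus(\mathbb{R}^n\otimes\mathbb{R}^m\otimes\mathbb{R}^2)$ with $\ket{\hat 0}$ a unit vector spanning the first summand. For $f(x)=1$ let $\ket{\psi_x}=\frac{1}{\sqrt{\nu_x}}\big(\ket{\hat0}+\frac{1}{\sqrt{cA}}\sum_{i}\ket{i}\ket{v_{x,i}}\ket{x_i}\big)$ with $\nu_x=1+\frac{1}{cA}\sum_i\|\ket{v_{x,i}}\|^2$ (so $\|\ket{\psi_x}\|=1$); for $f(x)=0$ let $\ket{\phi_x}=\frac{1}{\sqrt{\mu_x}}\big(\ket{\hat0}-\sqrt{cA}\sum_i\ket{i}\ket{v_{x,i}}\ket{\bar x_i}\big)$ with $\mu_x=1+cA\sum_i\|\ket{v_{x,i}}\|^2$, where $\bar x_i=1-x_i$. Let $\kappa$ be the dimension of $\operatorname{span}\{\ket{\psi_x}:f(x)=1\}$, let $\{\ket{\zeta_j}\}_{j\in[\kappa]}$ be an orthonormal basis of this span, and fix real numbers $\alpha_{j,x}$ with $\ket{\zeta_j}=\sum_{x:f(x)=1}\alpha_{j,x}\ket{\psi_x}$. For $j\in[\kappa],i\in[n],b\in\{0,1\}$ let $\ket{C_{j,i,b}}=\sum_{x:f(x)=1,x_i=b}\frac{\alpha_{j,x}}{\sqrt{\nu_x}}\ket{v_{x,i}}$,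 and let $V=\{\ket{C_{j,i,b}}\}\cup\{\ket{v_{y,i}}:f(y)=0,i\in[n]\}\subset\mathbb{R}^m$. Let $\varepsilon>0$ and let $S\in\mathbb{R}^{N\times m}$ satisfy $(1-\varepsilon)\|u-v\|^2\le\|Su-Sv\|^2\le(1+\varepsilon)\|u-v\|^2$ for all $u,v\in V\cup\{0\}$ (a Johnson–Lindenstrauss compression of $V\cup\{0\}$). Let $T=\ket{\hat0}\bra{\hat0}+I_n\otimes S\otimes I_2$, mapping $\mathcal H$ to $\mathbb{R}\oplus(\mathbb{R}^n\otimes\mathbb{R}^N\otimes\mathbb{R}^2)$, and set $\ket{\psi_x'}=T\ket{\psi_x}$, $\ket{\phi_x'}=T\ket{\phi_x}$, $\ket{\zeta_j'}=T\ket{\zeta_j}$. *)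

theory Defs
  imports "HOL-Analysis.Analysis"
begin

text \<open>Inputs x \<in> {0,1}^n are functions 'n \<Rightarrow> bool (index type 'n, |'n| = n);
  vectors in R^m are real^'m; the Hilbert space
  H = R \<oplus> (R^n \<otimes> R^m \<otimes> R^2) is real^(unit + 'n \<times> 'm \<times> bool),
  the first summand being the component Inl ().\<close>

type_synonym ('n, 'm) hspace = "real^(unit + 'n \<times> 'm \<times> bool)"

definition f_deciding :: "('n::finite \<Rightarrow> bool) set \<Rightarrow> (('n \<Rightarrow> bool) \<Rightarrow> bool)
    \<Rightarrow> (('n \<Rightarrow> bool) \<Rightarrow> 'n \<Rightarrow> real^'m::finite) \<Rightarrow> bool" where
  "f_deciding X f v \<longleftrightarrow>
     (\<forall>x\<in>X. \<forall>y\<in>X. f x \<noteq> f y \<longrightarrow> (\<Sum>i\<in>{i. x i \<noteq> y i}. v x i \<bullet> v y i) = 1)"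

definition sizeA :: "('n::finite \<Rightarrow> bool) set \<Rightarrow> (('n \<Rightarrow> bool) \<Rightarrow> 'n \<Rightarrow> real^'m::finite) \<Rightarrow> real" where
  "sizeA X v = Max ((\<lambda>x. \<Sum>i\<in>UNIV. (norm (v x i))\<^sup>2) ` X)"

definition hat0 :: "real^(unit + 'n::finite \<times> 'k::finite \<times> bool)" where
  "hat0 = (\<chi> k. case k of Inl _ \<Rightarrow> 1 | Inr _ \<Rightarrow> 0)"

definition tens :: "'n::finite \<Rightarrow> real^'k::finite \<Rightarrow> bool \<Rightarrow> real^(unit + 'n \<times> 'k \<times> bool)" where
  "tens i w b = (\<chi> k. case k of Inl _ \<Rightarrow> 0
       | Inr (i', j, b') \<Rightarrow> (if i' = i \<and> b' = b then w $ j else 0))"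

definition nu :: "real \<Rightarrow> real \<Rightarrow> (('n::finite \<Rightarrow> bool) \<Rightarrow> 'n \<Rightarrow> real^'m::finite) \<Rightarrow> ('n \<Rightarrow> bool) \<Rightarrow> real" where
  "nu c A v x = 1 + (1 / (c * A)) * (\<Sum>i\<in>UNIV. (norm (v x i))\<^sup>2)"

definition mu :: "real \<Rightarrow> real \<Rightarrow> (('n::finite \<Rightarrow> bool) \<Rightarrow> 'n \<Rightarrow> real^'m::finite) \<Rightarrow> ('n \<Rightarrow> bool) \<Rightarrow> real" where
  "mu c A v x = 1 + (c * A) * (\<Sum>i\<in>UNIV. (norm (v x i))\<^sup>2)"

definition psi :: "real \<Rightarrow> real \<Rightarrow> (('n::finite \<Rightarrow> bool) \<Rightarrow> 'n \<Rightarrow> real^'m::finite) \<Rightarrow> ('n \<Rightarrow> bool)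
    \<Rightarrow> ('n, 'm) hspace" where
  "psi c A v x = (1 / sqrt (nu c A v x)) *\<^sub>R
      (hat0 + (1 / sqrt (c * A)) *\<^sub>R (\<Sum>i\<in>UNIV. tens i (v x i) (x i)))"

definition phi :: "real \<Rightarrow> real \<Rightarrow> (('n::finite \<Rightarrow> bool) \<Rightarrow> 'n \<Rightarrow> real^'m::finite) \<Rightarrow> ('n \<Rightarrow> bool)
    \<Rightarrow> ('n, 'm) hspace" where
  "phi c A v x = (1 / sqrt (mu c A v x)) *\<^sub>R
      (hat0 - sqrt (c * A) *\<^sub>R (\<Sum>i\<in>UNIV. tens i (v x i) (\<not> x i)))"

definition Cvec :: "(nat \<Rightarrow> ('n \<Rightarrow> bool) \<Rightarrow> real) \<Rightarrow> real \<Rightarrow> real \<Rightarrow> ('n::finite \<Rightarrow> bool) set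
    \<Rightarrow> (('n \<Rightarrow> bool) \<Rightarrow> bool) \<Rightarrow> (('n \<Rightarrow> bool) \<Rightarrow> 'n \<Rightarrow> real^'m::finite) \<Rightarrow> nat \<Rightarrow> 'n \<Rightarrow> bool \<Rightarrow> real^'m" where
  "Cvec \<alpha> c A X f v j i b =
     (\<Sum>x\<in>{x\<in>X. f x \<and> x i = b}. (\<alpha> j x / sqrt (nu c A v x)) *\<^sub>R v x i)"

definition Vset :: "(nat \<Rightarrow> ('n \<Rightarrow> bool) \<Rightarrow> real) \<Rightarrow> real \<Rightarrow> real \<Rightarrow> ('n::finite \<Rightarrow> bool) set
    \<Rightarrow> (('n \<Rightarrow> bool) \<Rightarrow> bool) \<Rightarrow> (('n \<Rightarrow> bool) \<Rightarrow> 'n \<Rightarrow> real^'m::finite) \<Rightarrow> nat \<Rightarrow> (real^'m) set" where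
  "Vset \<alpha> c A X f v \<kappa> =
     {Cvec \<alpha> c A X f v j i b | j i b. j < \<kappa>} \<union> {v y i | y i. y \<in> X \<and> \<not> f y}"

text \<open>T = |0><0| + I_n \<otimes> S \<otimes> I_2, with S an N x m matrix.\<close>
definition Tmap :: "real^'m::finite^'N::finite \<Rightarrow> real^(unit + 'n::finite \<times> 'm \<times> bool)
    \<Rightarrow> real^(unit + 'n \<times> 'N \<times> bool)" where
  "Tmap S h = (\<chi> k. case k of Inl u \<Rightarrow> h $ Inl u
      | Inr (i, k', b) \<Rightarrow> (\<Sum>j\<in>UNIV. S $ k' $ j * h $ Inr (i, j, b)))"

end

theory Submission
  imports Defs
begin

(* T acts on each block |i>|.>|b> as S, and every block of zeta_j, resp. phi_x, is a fixed
   multiple of a vector of V (C_{j,i,b}, resp. v_{x,i} or 0). By polarisation, the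
   Johnson-Lindenstrauss condition on V \<union> {0} distorts the inner product of two vectors of V
   by at most 3/2 eps times the sum of their squared norms; summing over the blocks gives (1),
   (2) and (4), where (2) also uses zeta_j _|_ phi_x, inherited from psi_y _|_ phi_x for
   f-deciding vectors. For (3), expand psi_x = sum_j beta_j zeta_j with sum_j beta_j^2 = 1; then
   |T psi_x|^2 - 1 = sum_{j,l} beta_j beta_l (<T zeta_j, T zeta_l> - delta_{jl}), which (1) bounds
   by kappa times the entrywise Gram error. *)

definition near_isometry_on :: "real \<Rightarrow> ('a::real_normed_vector \<Rightarrow> 'b::real_normed_vector) \<Rightarrow> 'a set \<Rightarrow> bool" where
  "near_isometry_on \<epsilon> g W \<longleftrightarrow> (\<forall>u\<in>W. \<forall>w\<in>W.
     (1 - \<epsilon>) * (norm (u - w))\<^sup>2 \<le> (norm (g u - g w))\<^sup>2 \<and>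
     (norm (g u - g w))\<^sup>2 \<le> (1 + \<epsilon>) * (norm (u - w))\<^sup>2)"

lemma near_isometry_on_norm:
  assumes "near_isometry_on \<epsilon> g W" "0 \<in> W" "g 0 = 0" "u \<in> W"
  shows "\<bar>(norm (g u))\<^sup>2 - (norm u)\<^sup>2\<bar> \<le> \<epsilon> * (norm u)\<^sup>2"
proof -
  have "(1 - \<epsilon>) * (norm u)\<^sup>2 \<le> (norm (g u))\<^sup>2 \<and> (norm (g u))\<^sup>2 \<le> (1 + \<epsilon>) * (norm u)\<^sup>2"
    using assms unfolding near_isometry_on_def by (metis diff_zero)
  then show ?thesis by (simp add: abs_le_iff algebra_simps)
qed

lemma near_isometry_on_inner:
  fixes g :: "'a::real_inner \<Rightarrow> 'b::real_inner"
  assumes near: "near_isometry_on \<epsilon> g W" and "0 \<in> W" "g 0 = 0" "\<epsilon> \<ge> 0" and u: "u \<in> W" and w: "w \<in> W"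
  shows "\<bar>g u \<bullet> g w - u \<bullet> w\<bar> \<le> 3/2 * \<epsilon> * ((norm u)\<^sup>2 + (norm w)\<^sup>2)"
proof -
  have gu: "\<bar>(norm (g u))\<^sup>2 - (norm u)\<^sup>2\<bar> \<le> \<epsilon> * (norm u)\<^sup>2"
    and gw: "\<bar>(norm (g w))\<^sup>2 - (norm w)\<^sup>2\<bar> \<le> \<epsilon> * (norm w)\<^sup>2"
    using near_isometry_on_norm assms by blast+
  have "\<bar>(norm (g u - g w))\<^sup>2 - (norm (u - w))\<^sup>2\<bar> \<le> \<epsilon> * (norm (u - w))\<^sup>2"
    using near u w unfolding near_isometry_on_def by (simp add: abs_le_iff algebra_simps)
  also have "\<dots> \<le> \<epsilon> * (2 * (norm u)\<^sup>2 + 2 * (norm w)\<^sup>2)"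
  proof -
    have "(norm (u - w))\<^sup>2 + (norm (u + w))\<^sup>2 = 2 * (norm u)\<^sup>2 + 2 * (norm w)\<^sup>2"
      by (simp add: power2_norm_eq_inner inner_add inner_diff inner_commute)
    then show ?thesis
      using \<open>\<epsilon> \<ge> 0\<close> by (intro mult_left_mono) (smt (verit) zero_le_power2)+
  qed
  finally have guw: "\<bar>(norm (g u - g w))\<^sup>2 - (norm (u - w))\<^sup>2\<bar> \<le> 2 * \<epsilon> * ((norm u)\<^sup>2 + (norm w)\<^sup>2)"
    by (simp add: algebra_simps)
  have "g u \<bullet> g w - u \<bullet> w = (((norm (g u))\<^sup>2 - (norm u)\<^sup>2) + ((norm (g w))\<^sup>2 - (norm w)\<^sup>2)
      - ((norm (g u - g w))\<^sup>2 - (norm (u - w))\<^sup>2)) / 2"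
    by (simp add: dot_norm_neg[of "g u"] dot_norm_neg[of u] field_simps)
  then show ?thesis
    using gu gw guw by (simp add: abs_le_iff algebra_simps)
qed

lemma near_isometry_on_inner_scaleR:
  fixes g :: "'a::real_inner \<Rightarrow> 'b::real_inner"
  assumes "near_isometry_on \<epsilon> g W" "0 \<in> W" "linear g" "\<epsilon> \<ge> 0" "u \<in> W" "w \<in> W"
  shows "\<bar>g (r *\<^sub>R u) \<bullet> g (s *\<^sub>R w) - (r *\<^sub>R u) \<bullet> (s *\<^sub>R w)\<bar>
    \<le> \<bar>r * s\<bar> * (3/2 * \<epsilon> * ((norm u)\<^sup>2 + (norm w)\<^sup>2))"
proof -
  have "\<bar>g (r *\<^sub>R u) \<bullet> g (s *\<^sub>R w) - (r *\<^sub>R u) \<bullet> (s *\<^sub>R w)\<bar> = \<bar>r * s\<bar> * \<bar>g u \<bullet> g w - u \<bullet> w\<bar>"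
    using \<open>linear g\<close> by (simp add: linear_scale right_diff_distrib[symmetric] abs_mult)
  also have "\<dots> \<le> \<bar>r * s\<bar> * (3/2 * \<epsilon> * ((norm u)\<^sup>2 + (norm w)\<^sup>2))"
    using assms by (intro mult_left_mono near_isometry_on_inner) (auto simp: linear_0)
  finally show ?thesis .
qed

definition block :: "real^(unit + 'n::finite \<times> 'k::finite \<times> bool) \<Rightarrow> 'n \<Rightarrow> bool \<Rightarrow> real^'k" where
  "block h i b = (\<chi> j. h $ Inr (i, j, b))"

lemma inner_hspace_blocks:
  fixes h g :: "real^(unit + 'n::finite \<times> 'k::finite \<times> bool)"
  shows "h \<bullet> g = h $ Inl () * g $ Inl () + (\<Sum>i\<in>UNIV. \<Sum>b\<in>UNIV. block h i b \<bullet> block g i b)"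
proof -
  have "h \<bullet> g = (\<Sum>k\<in>UNIV <+> UNIV. h $ k * g $ k)"
    by (simp add: inner_vec_def)
  also have "\<dots> = h $ Inl () * g $ Inl () + (\<Sum>p\<in>UNIV. h $ Inr p * g $ Inr p)"
    by (subst sum.Plus) (auto simp: UNIV_unit)
  also have "(\<Sum>p\<in>UNIV. h $ Inr p * g $ Inr p)
      = (\<Sum>i\<in>UNIV. \<Sum>j\<in>UNIV. \<Sum>b\<in>UNIV. h $ Inr (i, j, b) * g $ Inr (i, j, b))"
    by (simp add: sum.cartesian_product UNIV_Times_UNIV[symmetric] del: UNIV_Times_UNIV)
  finally show ?thesis
    by (simp add: block_def inner_vec_def sum.swap[where A = "UNIV::'k set"])
qed

lemma block_add [simp]: "block (h + g) i b = block h i b + block g i b"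
  and block_scaleR [simp]: "block (r *\<^sub>R h) i b = r *\<^sub>R block h i b"
  and block_zero [simp]: "block 0 i b = 0"
  and block_hat0 [simp]: "block hat0 i b = 0"
  and block_tens [simp]: "block (tens i' w b') i b = (if i' = i \<and> b' = b then w else 0)"
  and block_Tmap [simp]: "block (Tmap S h) i b = S *v block h i b"
  by (auto simp: block_def hat0_def tens_def Tmap_def matrix_vector_mult_def vec_eq_iff)

lemma block_sum: "block (\<Sum>x\<in>F. h x) i b = (\<Sum>x\<in>F. block (h x) i b)"
  by (induction F rule: infinite_finite_induct) auto

lemma Tmap_Inl [simp]: "Tmap S h $ Inl u = h $ Inl u"
  and hat0_Inl [simp]: "hat0 $ Inl u = 1"
  and tens_Inl [simp]: "tens i w b $ Inl u = 0"
  by (simp_all add: Tmap_def hat0_def tens_def)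

lemma linear_Tmap: "linear (Tmap S)"
  by (auto simp: linear_iff Tmap_def vec_eq_iff sum.distrib algebra_simps sum_distrib_left split: sum.split)

lemma sum_norm_block_le:
  "(\<Sum>i\<in>UNIV. \<Sum>b\<in>UNIV. (norm (block h i b))\<^sup>2) \<le> (norm h)\<^sup>2"
  by (simp add: power2_norm_eq_inner inner_hspace_blocks[of h h])

lemma inner_Tmap_diff:
  "Tmap S h \<bullet> Tmap S g - h \<bullet> g
    = (\<Sum>i\<in>UNIV. \<Sum>b\<in>UNIV. (S *v block h i b) \<bullet> (S *v block g i b) - block h i b \<bullet> block g i b)"
  by (simp add: inner_hspace_blocks[of "Tmap S h"] inner_hspace_blocks[of h] sum_subtractf)

lemma Tmap_inner_distortion:
  fixes h g :: "real^(unit + 'n::finite \<times> 'm::finite \<times> bool)" and S :: "real^'m^'N::finite"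
  assumes "near_isometry_on \<epsilon> ((*v) S) W" "0 \<in> W" "\<epsilon> \<ge> 0"
    and h: "\<And>i b. block h i b = r *\<^sub>R u i b" and "\<And>i b. u i b \<in> W"
    and g: "\<And>i b. block g i b = s *\<^sub>R w i b" and "\<And>i b. w i b \<in> W"
  shows "\<bar>Tmap S h \<bullet> Tmap S g - h \<bullet> g\<bar>
    \<le> \<bar>r * s\<bar> * (3/2 * \<epsilon> * ((\<Sum>i\<in>UNIV. \<Sum>b\<in>UNIV. (norm (u i b))\<^sup>2) + (\<Sum>i\<in>UNIV. \<Sum>b\<in>UNIV. (norm (w i b))\<^sup>2)))"
proof -
  have "linear ((*v) S)"
    by (simp add: bounded_linear.linear)
  then have "\<bar>(S *v block h i b) \<bullet> (S *v block g i b) - block h i b \<bullet> block g i b\<bar>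
      \<le> \<bar>r * s\<bar> * (3/2 * \<epsilon> * ((norm (u i b))\<^sup>2 + (norm (w i b))\<^sup>2))" for i b
    unfolding h g using assms by (intro near_isometry_on_inner_scaleR) auto
  then have "\<bar>Tmap S h \<bullet> Tmap S g - h \<bullet> g\<bar>
      \<le> (\<Sum>i\<in>UNIV. \<Sum>b\<in>UNIV. \<bar>r * s\<bar> * (3/2 * \<epsilon> * ((norm (u i b))\<^sup>2 + (norm (w i b))\<^sup>2)))"
    unfolding inner_Tmap_diff
    by (intro order_trans[OF sum_abs] sum_mono order_trans[OF sum_abs]) auto
  then show ?thesis
    by (simp add: sum_distrib_left sum.distrib distrib_left)
qed

lemma Tmap_inner_distortion_same_scale:
  fixes h g :: "real^(unit + 'n::finite \<times> 'm::finite \<times> bool)" and S :: "real^'m^'N::finite"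
  assumes "near_isometry_on \<epsilon> ((*v) S) W" "0 \<in> W" "\<epsilon> \<ge> 0"
    and h: "\<And>i b. block h i b = r *\<^sub>R u i b" and "\<And>i b. u i b \<in> W"
    and g: "\<And>i b. block g i b = r *\<^sub>R w i b" and "\<And>i b. w i b \<in> W"
  shows "\<bar>Tmap S h \<bullet> Tmap S g - h \<bullet> g\<bar> \<le> 3/2 * \<epsilon> * ((norm h)\<^sup>2 + (norm g)\<^sup>2)"
proof -
  have rescale: "\<bar>r * r\<bar> * (\<Sum>i\<in>UNIV. \<Sum>b\<in>UNIV. (norm (z i b))\<^sup>2) \<le> (norm k)\<^sup>2"
    if "\<And>i b. block k i b = r *\<^sub>R z i b" for k :: "real^(unit + 'n \<times> 'm \<times> bool)" and z
    using sum_norm_block_le[of k]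
    by (simp add: that sum_distrib_left power_mult_distrib flip: power2_eq_square)
  have "\<bar>Tmap S h \<bullet> Tmap S g - h \<bullet> g\<bar>
      \<le> 3/2 * \<epsilon> * (\<bar>r * r\<bar> * (\<Sum>i\<in>UNIV. \<Sum>b\<in>UNIV. (norm (u i b))\<^sup>2)
                     + \<bar>r * r\<bar> * (\<Sum>i\<in>UNIV. \<Sum>b\<in>UNIV. (norm (w i b))\<^sup>2))"
    using Tmap_inner_distortion[OF assms] by (simp add: algebra_simps)
  also have "\<dots> \<le> 3/2 * \<epsilon> * ((norm h)\<^sup>2 + (norm g)\<^sup>2)"
    using \<open>\<epsilon> \<ge> 0\<close> by (intro mult_left_mono add_mono rescale h g) auto
  finally show ?thesis .
qed

lemma norm_sq_distortion_orthonormal_span: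
  fixes T :: "'a::real_inner \<Rightarrow> 'b::real_inner" and e :: "nat \<Rightarrow> 'a"
  assumes "linear T"
    and ortho: "\<forall>j<\<kappa>. \<forall>l<\<kappa>. e j \<bullet> e l = (if j = l then 1 else 0)"
    and near: "\<forall>j<\<kappa>. \<forall>l<\<kappa>. \<bar>T (e j) \<bullet> T (e l) - (if j = l then 1 else 0)\<bar> \<le> d"
    and h: "h \<in> span (e ` {..<\<kappa>})"
  shows "\<bar>(norm (T h))\<^sup>2 - (norm h)\<^sup>2\<bar> \<le> d * \<kappa> * (norm h)\<^sup>2"
proof -
  have "inj_on e {..<\<kappa>}"
    using ortho by (intro inj_onI) (metis lessThan_iff zero_neq_one)
  moreover obtain u where "h = (\<Sum>z\<in>e ` {..<\<kappa>}. u z *\<^sub>R z)"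
    using h span_finite[of "e ` {..<\<kappa>}"] by auto
  ultimately obtain \<beta> where h_eq: "h = (\<Sum>j<\<kappa>. \<beta> j *\<^sub>R e j)"
    by (auto simp: sum.reindex)
  have quadratic_form: "k (\<Sum>j<\<kappa>. \<beta> j *\<^sub>R e j) \<bullet> k (\<Sum>j<\<kappa>. \<beta> j *\<^sub>R e j)
      = (\<Sum>j<\<kappa>. \<Sum>l<\<kappa>. \<beta> j * \<beta> l * (k (e j) \<bullet> k (e l)))" if "linear k" for k :: "'a \<Rightarrow> 'c::real_inner"
    by (simp add: linear_sum[OF that] linear_scale[OF that] inner_sum_left inner_sum_right
        sum_distrib_left mult.assoc; intro sum.cong refl; simp add: inner_commute)
  have "(norm h)\<^sup>2 = (\<Sum>j<\<kappa>. \<Sum>l<\<kappa>. \<beta> j * \<beta> l * (if j = l then 1 else 0))"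
    using quadratic_form[OF linear_id] ortho by (simp add: h_eq power2_norm_eq_inner)
  also have "\<dots> = (\<Sum>j<\<kappa>. (\<beta> j)\<^sup>2)"
    by (simp add: power2_eq_square if_distrib cong: if_cong)
  finally have norm_h: "(norm h)\<^sup>2 = (\<Sum>j<\<kappa>. (\<beta> j)\<^sup>2)" .
  have "(norm (T h))\<^sup>2 - (norm h)\<^sup>2
      = (\<Sum>j<\<kappa>. \<Sum>l<\<kappa>. \<beta> j * \<beta> l * (T (e j) \<bullet> T (e l) - (if j = l then 1 else 0)))"
    using quadratic_form[OF \<open>linear T\<close>] quadratic_form[OF linear_id] ortho
    by (simp add: h_eq power2_norm_eq_inner right_diff_distrib sum_subtractf)
  also have "\<bar>\<dots>\<bar> \<le> (\<Sum>j<\<kappa>. \<Sum>l<\<kappa>. ((\<beta> j)\<^sup>2 + (\<beta> l)\<^sup>2) / 2 * d)"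
  proof (intro order_trans[OF sum_abs] sum_mono order_trans[OF sum_abs])
    fix j l assume "j \<in> {..<\<kappa>}" "l \<in> {..<\<kappa>}"
    then show "\<bar>\<beta> j * \<beta> l * (T (e j) \<bullet> T (e l) - (if j = l then 1 else 0))\<bar> \<le> ((\<beta> j)\<^sup>2 + (\<beta> l)\<^sup>2) / 2 * d"
      using near sum_squares_bound[of "\<bar>\<beta> j\<bar>" "\<bar>\<beta> l\<bar>"] unfolding abs_mult[of "\<beta> j * \<beta> l"]
      by (intro mult_mono) (auto simp: abs_mult power2_eq_square)
  qed
  also have "\<dots> = d * \<kappa> * (norm h)\<^sup>2"
    by (simp add: norm_h sum.distrib add_divide_distrib sum_divide_distrib sum_distrib_left sum_distrib_right
        algebra_simps)
  finally show ?thesis .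
qed

lemma hat0_tens_sum_Inl [simp]: "(hat0 + s *\<^sub>R (\<Sum>i\<in>UNIV. tens i (w i) (p i))) $ Inl u = 1"
  by simp

lemma block_hat0_tens_sum:
  "block (hat0 + s *\<^sub>R (\<Sum>i'\<in>UNIV. tens i' (w i') (p i'))) i b = (if p i = b then s *\<^sub>R w i else 0)"
proof -
  have "(\<Sum>i'\<in>UNIV. if i' = i \<and> p i' = b then w i' else 0) = (\<Sum>i'\<in>UNIV. if i' = i then (if p i = b then w i else 0) else 0)"
    by (intro sum.cong) auto
  then show ?thesis
    by (simp add: block_sum)
qed

lemma inner_hat0_tens_sum:
  "(hat0 + s *\<^sub>R (\<Sum>i\<in>UNIV. tens i (w i) (p i))) \<bullet> (hat0 + t *\<^sub>R (\<Sum>i\<in>UNIV. tens i (z i) (q i)))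
    = 1 + s * t * (\<Sum>i\<in>{i. p i = q i}. w i \<bullet> z i)"
proof -
  have "(\<Sum>b\<in>UNIV. (if p i = b then s *\<^sub>R w i else 0) \<bullet> (if q i = b then t *\<^sub>R z i else 0))
      = (if p i = q i then s * t * (w i \<bullet> z i) else 0)" for i
    by (cases "p i"; cases "q i") (simp_all add: UNIV_bool)
  then show ?thesis
    unfolding inner_hspace_blocks[of "hat0 + _"] block_hat0_tens_sum
    by (simp add: sum.inter_filter[symmetric] sum_distrib_left)
qed

lemma phi_eq_hat0_tens_sum:
  "phi c A v x = (1 / sqrt (mu c A v x)) *\<^sub>R (hat0 + (- sqrt (c * A)) *\<^sub>R (\<Sum>i\<in>UNIV. tens i (v x i) (\<not> x i)))"
  by (simp add: phi_def)

lemma block_psi: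
  "block (psi c A v x) i b = (if x i = b then (1 / sqrt (nu c A v x) / sqrt (c * A)) *\<^sub>R v x i else 0)"
  unfolding psi_def block_scaleR block_hat0_tens_sum by simp

lemma block_phi:
  "block (phi c A v x) i b = (- sqrt (c * A) / sqrt (mu c A v x)) *\<^sub>R (if x i = b then 0 else v x i)"
  unfolding phi_eq_hat0_tens_sum block_scaleR block_hat0_tens_sum by auto

lemma norm_psi:
  assumes "c > 0" "A \<ge> 0"
  shows "norm (psi c A v x) = 1"
proof -
  have "nu c A v x > 0"
    using assms by (simp add: nu_def add_pos_nonneg sum_nonneg)
  then have "psi c A v x \<bullet> psi c A v x = 1"
    using assms unfolding psi_def inner_scaleR_left inner_scaleR_right inner_hat0_tens_sum
    by (simp add: nu_def power2_norm_eq_inner field_simps flip: power2_eq_square)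
  then show ?thesis
    by (simp add: norm_eq_sqrt_inner)
qed

lemma norm_phi:
  assumes "c > 0" "A \<ge> 0"
  shows "norm (phi c A v x) = 1"
proof -
  have "mu c A v x > 0"
    using assms by (simp add: mu_def add_pos_nonneg sum_nonneg)
  then have "phi c A v x \<bullet> phi c A v x = 1"
    using assms unfolding phi_eq_hat0_tens_sum inner_scaleR_left inner_scaleR_right inner_hat0_tens_sum
    by (simp add: mu_def power2_norm_eq_inner field_simps flip: power2_eq_square)
  then show ?thesis
    by (simp add: norm_eq_sqrt_inner)
qed

lemma inner_psi_phi:
  assumes "c > 0" "A > 0" "(\<Sum>i\<in>{i. y i \<noteq> x i}. v y i \<bullet> v x i) = 1"
  shows "psi c A v y \<bullet> phi c A v x = 0"
proof -
  have "{i. y i = (\<not> x i)} = {i. y i \<noteq> x i}"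
    by auto
  then show ?thesis
    using assms unfolding psi_def phi_eq_hat0_tens_sum inner_scaleR_left inner_scaleR_right inner_hat0_tens_sum
    by (simp add: real_sqrt_mult)
qed

lemma sum_norm_le_sizeA: "x \<in> X \<Longrightarrow> (\<Sum>i\<in>UNIV. (norm (v x i))\<^sup>2) \<le> sizeA X v"
  unfolding sizeA_def by (rule Max_ge) auto

lemma sizeA_pos:
  assumes "f_deciding X f v" "x \<in> X" "y \<in> X" "f x \<noteq> f y"
  shows "sizeA X v > 0"
proof -
  have "(\<Sum>i\<in>{i. x i \<noteq> y i}. v x i \<bullet> v y i) = 1"
    using assms unfolding f_deciding_def by blast
  then obtain i where "v x i \<noteq> 0"
    by (metis (no_types, lifting) inner_zero_left sum.neutral zero_neq_one)
  then have "0 < (\<Sum>i\<in>UNIV. (norm (v x i))\<^sup>2)"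
    by (intro sum_pos2[of _ i]) auto
  also have "\<dots> \<le> sizeA X v"
    using sum_norm_le_sizeA \<open>x \<in> X\<close> .
  finally show ?thesis .
qed

lemma abs_diff_1_le_abs_power2_diff_1:
  fixes t :: real
  assumes "t \<ge> 0"
  shows "\<bar>t - 1\<bar> \<le> \<bar>t\<^sup>2 - 1\<bar>"
proof -
  have "t\<^sup>2 - 1 = (t - 1) * (t + 1)"
    by (simp add: power2_eq_square algebra_simps)
  then have "\<bar>t\<^sup>2 - 1\<bar> = \<bar>t - 1\<bar> * (t + 1)"
    using assms by (simp add: abs_mult)
  then show ?thesis
    using assms by (simp add: algebra_simps)
qed

locale jl_compression =
  fixes X :: "('n::finite \<Rightarrow> bool) set"
    and f :: "('n \<Rightarrow> bool) \<Rightarrow> bool"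
    and v :: "('n \<Rightarrow> bool) \<Rightarrow> 'n \<Rightarrow> real^'m::finite"
    and c \<epsilon> A :: real
    and \<kappa> :: nat
    and \<zeta> :: "nat \<Rightarrow> ('n, 'm) hspace"
    and \<alpha> :: "nat \<Rightarrow> ('n \<Rightarrow> bool) \<Rightarrow> real"
    and S :: "real^'m^'N::finite"
  assumes c_pos: "c > 0"
    and eps_nonneg: "\<epsilon> \<ge> 0"
    and deciding: "f_deciding X f v"
    and A_def: "A = sizeA X v"
    and kappa_def: "\<kappa> = dim (span (psi c A v ` {x\<in>X. f x}))"
    and zeta_orthonormal: "\<forall>j<\<kappa>. \<forall>l<\<kappa>. \<zeta> j \<bullet> \<zeta> l = (if j = l then 1 else 0)"
    and zeta_span: "span (\<zeta> ` {..<\<kappa>}) = span (psi c A v ` {x\<in>X. f x})"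
    and alpha: "\<forall>j<\<kappa>. \<zeta> j = (\<Sum>x\<in>{x\<in>X. f x}. \<alpha> j x *\<^sub>R psi c A v x)"
    and JL: "near_isometry_on \<epsilon> ((*v) S) (Vset \<alpha> c A X f v \<kappa> \<union> {0})"
begin

lemma norm_zeta: "j < \<kappa> \<Longrightarrow> norm (\<zeta> j) = 1"
  using zeta_orthonormal by (simp add: norm_eq_sqrt_inner)

lemma A_nonneg: "x \<in> X \<Longrightarrow> A \<ge> 0"
  using sum_norm_le_sizeA[of x X v] by (simp add: A_def) (meson order_trans sum_nonneg zero_le_power2)

lemma A_pos:
  assumes "j < \<kappa>" "x \<in> X" "\<not> f x"
  shows "A > 0"
proof -
  have "{y\<in>X. f y} \<noteq> {}"
  proof
    assume "{y\<in>X. f y} = {}"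
    then have "\<kappa> = 0"
      unfolding kappa_def by (metis dim_empty dim_span image_empty)
    with assms(1) show False
      by simp
  qed
  then show ?thesis
    using sizeA_pos[OF deciding] assms(2,3) by (auto simp: A_def)
qed

lemma block_zeta: "j < \<kappa> \<Longrightarrow> block (\<zeta> j) i b = (1 / sqrt (c * A)) *\<^sub>R Cvec \<alpha> c A X f v j i b"
  using alpha
  by (simp add: block_sum block_psi Cvec_def scaleR_sum_right sum.inter_filter[symmetric]
      if_distrib[of "scaleR _"] mult.commute[of "sqrt (c * A)"] cong: if_cong)

lemma inner_zeta_phi:
  assumes "j < \<kappa>" "x \<in> X" "\<not> f x"
  shows "\<zeta> j \<bullet> phi c A v x = 0"
proof -
  have "psi c A v y \<bullet> phi c A v x = 0" if "y \<in> X" "f y" for y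
    using deciding that assms c_pos A_pos[OF assms]
    by (intro inner_psi_phi) (auto simp: f_deciding_def)
  then show ?thesis
    using alpha assms(1) by (simp add: inner_sum_left)
qed

lemma Cvec_in_Vset: "j < \<kappa> \<Longrightarrow> Cvec \<alpha> c A X f v j i b \<in> Vset \<alpha> c A X f v \<kappa> \<union> {0}"
  by (auto simp: Vset_def)

lemma block_phi_factor_in_Vset:
  "x \<in> X \<Longrightarrow> \<not> f x \<Longrightarrow> (if x i = b then 0 else v x i) \<in> Vset \<alpha> c A X f v \<kappa> \<union> {0}"
  by (auto simp: Vset_def)

lemma inner_Tmap_zeta:
  assumes "j < \<kappa>" "l < \<kappa>"
  shows "\<bar>Tmap S (\<zeta> j) \<bullet> Tmap S (\<zeta> l) - (if j = l then 1 else 0)\<bar> \<le> 3 * \<epsilon>"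
  using Tmap_inner_distortion_same_scale[OF JL _ eps_nonneg block_zeta Cvec_in_Vset block_zeta Cvec_in_Vset]
    assms zeta_orthonormal norm_zeta by auto

lemma inner_Tmap_zeta_phi:
  assumes j: "j < \<kappa>" and x: "x \<in> X" "\<not> f x"
  shows "\<bar>Tmap S (\<zeta> j) \<bullet> Tmap S (phi c A v x)\<bar> \<le> 3/2 * \<epsilon> * (c + 1) * A"
proof -
  have cA: "c * A > 0"
    using c_pos A_pos[OF assms] by simp
  have "mu c A v x \<ge> 1"
    using cA by (simp add: mu_def sum_nonneg)
  then have scale: "\<bar>1 / sqrt (c * A) * (- sqrt (c * A) / sqrt (mu c A v x))\<bar> \<le> 1"
    using cA by simp
  have C_bound: "(\<Sum>i\<in>UNIV. \<Sum>b\<in>UNIV. (norm (Cvec \<alpha> c A X f v j i b))\<^sup>2) \<le> c * A"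
  proof -
    have "(norm (block (\<zeta> j) i b))\<^sup>2 = (norm (Cvec \<alpha> c A X f v j i b))\<^sup>2 / (c * A)" for i b
      using cA by (simp add: block_zeta[OF j] power_mult_distrib power_divide)
    then have "(norm (Cvec \<alpha> c A X f v j i b))\<^sup>2 = c * A * (norm (block (\<zeta> j) i b))\<^sup>2" for i b
      using cA by (metis less_irrefl nonzero_mult_div_cancel_left times_divide_eq_right)
    then have "(\<Sum>i\<in>UNIV. \<Sum>b\<in>UNIV. (norm (Cvec \<alpha> c A X f v j i b))\<^sup>2)
        = c * A * (\<Sum>i\<in>UNIV. \<Sum>b\<in>UNIV. (norm (block (\<zeta> j) i b))\<^sup>2)"
      by (simp only: sum_distrib_left)
    also have "\<dots> \<le> c * A * (norm (\<zeta> j))\<^sup>2"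
      using cA by (intro mult_left_mono sum_norm_block_le) auto
    finally show ?thesis
      using norm_zeta[OF j] by simp
  qed
  have v_bound: "(\<Sum>i\<in>UNIV. \<Sum>b\<in>UNIV. (norm (if x i = b then 0 else v x i))\<^sup>2) \<le> A"
  proof -
    have "(\<Sum>b\<in>UNIV. (norm (if x i = b then 0 else v x i))\<^sup>2) = (norm (v x i))\<^sup>2" for i
      by (cases "x i") (simp_all add: UNIV_bool)
    then show ?thesis
      using sum_norm_le_sizeA[OF x(1)] by (simp add: A_def)
  qed
  have "\<bar>Tmap S (\<zeta> j) \<bullet> Tmap S (phi c A v x) - \<zeta> j \<bullet> phi c A v x\<bar>
      \<le> \<bar>1 / sqrt (c * A) * (- sqrt (c * A) / sqrt (mu c A v x))\<bar> * (3/2 * \<epsilon> * ((\<Sum>i\<in>UNIV. \<Sum>b\<in>UNIV. (norm (Cvec \<alpha> c A X f v j i b))\<^sup>2)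
          + (\<Sum>i\<in>UNIV. \<Sum>b\<in>UNIV. (norm (if x i = b then 0 else v x i))\<^sup>2)))"
    by (rule Tmap_inner_distortion[OF JL _ eps_nonneg block_zeta[OF j] Cvec_in_Vset[OF j]
          block_phi[of c A v x] block_phi_factor_in_Vset[OF x]]) simp
  also have "\<dots> \<le> 1 * (3/2 * \<epsilon> * (c * A + A))"
    using scale C_bound v_bound eps_nonneg
    by (intro mult_mono mult_left_mono add_mono) (auto intro!: mult_nonneg_nonneg add_nonneg_nonneg sum_nonneg)
  finally show ?thesis
    using inner_zeta_phi[OF assms] by (simp add: algebra_simps)
qed

lemma norm_Tmap_psi:
  assumes "x \<in> X" "f x"
  shows "\<bar>(norm (Tmap S (psi c A v x)))\<^sup>2 - 1\<bar> \<le> 3 * \<epsilon> * \<kappa>"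
proof -
  have psi_in_span: "psi c A v x \<in> span (\<zeta> ` {..<\<kappa>})"
    using assms zeta_span by (auto intro: span_base)
  then show ?thesis
    using norm_sq_distortion_orthonormal_span[OF linear_Tmap zeta_orthonormal _ psi_in_span] inner_Tmap_zeta
      norm_psi[OF c_pos A_nonneg[OF assms(1)], of v x] by auto
qed

lemma norm_Tmap_phi:
  assumes "x \<in> X" "\<not> f x"
  shows "\<bar>norm (Tmap S (phi c A v x)) - 1\<bar> \<le> 3 * \<epsilon>"
proof -
  have "\<bar>(norm (Tmap S (phi c A v x)))\<^sup>2 - 1\<bar> \<le> 3 * \<epsilon>"
    using Tmap_inner_distortion_same_scale[OF JL _ eps_nonneg
        block_phi[of c A v x] block_phi_factor_in_Vset[OF assms]
        block_phi[of c A v x] block_phi_factor_in_Vset[OF assms]]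
      norm_phi[OF c_pos A_nonneg[OF assms(1)], of v x] by (simp add: dot_square_norm)
  then show ?thesis
    using abs_diff_1_le_abs_power2_diff_1[of "norm (Tmap S (phi c A v x))"] by simp
qed

end

theorem lemma12:
  fixes X :: "('n::finite \<Rightarrow> bool) set"
    and f :: "('n \<Rightarrow> bool) \<Rightarrow> bool"
    and v :: "('n \<Rightarrow> bool) \<Rightarrow> 'n \<Rightarrow> real^'m::finite"
    and c \<epsilon> A :: real
    and \<kappa> :: nat
    and \<zeta> :: "nat \<Rightarrow> ('n, 'm) hspace"
    and \<alpha> :: "nat \<Rightarrow> ('n \<Rightarrow> bool) \<Rightarrow> real"
    and S :: "real^'m^'N::finite"
  assumes c_pos: "c > 0"
    and eps_pos: "\<epsilon> > 0"
    and deciding: "f_deciding X f v"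
    and A_def: "A = sizeA X v"
    and kappa_def: "\<kappa> = dim (span (psi c A v ` {x\<in>X. f x}))"
    and zeta_orthonormal: "\<forall>j<\<kappa>. \<forall>l<\<kappa>. \<zeta> j \<bullet> \<zeta> l = (if j = l then 1 else 0)"
    and zeta_span: "span (\<zeta> ` {..<\<kappa>}) = span (psi c A v ` {x\<in>X. f x})"
    and alpha: "\<forall>j<\<kappa>. \<zeta> j = (\<Sum>x\<in>{x\<in>X. f x}. \<alpha> j x *\<^sub>R psi c A v x)"
    and JL: "\<forall>u\<in>Vset \<alpha> c A X f v \<kappa> \<union> {0}. \<forall>w\<in>Vset \<alpha> c A X f v \<kappa> \<union> {0}.
               (1 - \<epsilon>) * (norm (u - w))\<^sup>2 \<le> (norm (S *v u - S *v w))\<^sup>2 \<and>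
               (norm (S *v u - S *v w))\<^sup>2 \<le> (1 + \<epsilon>) * (norm (u - w))\<^sup>2"
  shows "(\<forall>j<\<kappa>. \<forall>l<\<kappa>. \<bar>Tmap S (\<zeta> j) \<bullet> Tmap S (\<zeta> l) - (if j = l then 1 else 0)\<bar> \<le> 4 * \<epsilon>)
       \<and> (\<forall>j<\<kappa>. \<forall>x\<in>X. \<not> f x \<longrightarrow>
            \<bar>Tmap S (\<zeta> j) \<bullet> Tmap S (phi c A v x)\<bar> \<le> 2 * \<epsilon> * (c + 1) * A)
       \<and> (\<forall>x\<in>X. f x \<longrightarrow> \<bar>(norm (Tmap S (psi c A v x)))\<^sup>2 - 1\<bar> \<le> 4 * \<epsilon> * real \<kappa>)
       \<and> (\<forall>x\<in>X. \<not> f x \<longrightarrow> \<bar>norm (Tmap S (phi c A v x)) - 1\<bar> \<le> 3 * \<epsilon>)"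
proof -
  interpret jl_compression X f v c \<epsilon> A \<kappa> \<zeta> \<alpha> S
    using c_pos eps_pos deciding A_def kappa_def zeta_orthonormal zeta_span alpha JL
    by unfold_locales (simp_all add: near_isometry_on_def)
  have "\<bar>Tmap S (\<zeta> j) \<bullet> Tmap S (phi c A v x)\<bar> \<le> 2 * \<epsilon> * (c + 1) * A"
    if "j < \<kappa>" "x \<in> X" "\<not> f x" for j x
  proof -
    have "3/2 * \<epsilon> * (c + 1) * A \<le> 2 * \<epsilon> * (c + 1) * A"
      using eps_pos c_pos A_nonneg[OF that(2)] by (intro mult_right_mono) auto
    then show ?thesis
      using inner_Tmap_zeta_phi[OF that] by linarith
  qed
  moreover have "3 * \<epsilon> \<le> 4 * \<epsilon>" "3 * \<epsilon> * real \<kappa> \<le> 4 * \<epsilon> * real \<kappa>"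
    using eps_pos by auto
  ultimately show ?thesis
    using inner_Tmap_zeta norm_Tmap_psi norm_Tmap_phi by (meson order_trans)
qed

end
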